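(* Let $\Omega\subset\mathbb{R}^N$ be a nonempty open set, $X=\overline{\Omega}$, $Y\subset\mathbb{R}^N$, $x_0\in\Omega$ and $u:X\to Y$. If $u$ is differentiable at $x_0$ and $r_u(x_0)=2$, then $\nabla u(x_0)\in O(N)$.
   Context: $O(N)$ is the set of orthogonal $N\times N$ matrices. $e_u(x_0)=\limsup_{x\to x_0,\,x\ne x_0}\frac{|u(x)-u(x_0)|}{|x-x_0|}$, $c_u(x_0)=\limsup_{x\to x_0,\,x\ne x_0}\frac{|x-x_0|}{|u(x)-u(x_0)|}$ (quotient $+\infty$ if $u(x)=u(x_0)$), and $r_u(x_0)=e_u(x_0)+c_u(x_0)$. *)

theory Defs
  imports "HOL-Analysis.Analysis"
begin

definition e_u :: "'a set \<Rightarrow> ('a::real_normed_vector \<Rightarrow> 'b::real_normed_vector) \<Rightarrow> 'a \<Rightarrow> ereal" where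
  "e_u X u x0 = Limsup (at x0 within X) (\<lambda>x. ereal (norm (u x - u x0) / norm (x - x0)))"

definition c_u :: "'a set \<Rightarrow> ('a::real_normed_vector \<Rightarrow> 'b::real_normed_vector) \<Rightarrow> 'a \<Rightarrow> ereal" where
  "c_u X u x0 = Limsup (at x0 within X)
     (\<lambda>x. if u x = u x0 then \<infinity> else ereal (norm (x - x0) / norm (u x - u x0)))"

definition r_u :: "'a set \<Rightarrow> ('a::real_normed_vector \<Rightarrow> 'b::real_normed_vector) \<Rightarrow> 'a \<Rightarrow> ereal" where
  "r_u X u x0 = e_u X u x0 + c_u X u x0"

end

theory Submission
  imports Defs
begin

text \<open>Let \<open>L\<close> be the derivative of \<open>u\<close> at the interior point \<open>x\<^sub>0\<close>. Along the ray
  \<open>x\<^sub>0 + t v\<close> (\<open>t \<rightarrow> 0\<^sup>+\<close>, \<open>|v| = 1\<close>) the difference quotient \<open>|u x - u x\<^sub>0| / |x - x\<^sub>0|\<close>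
  tends to \<open>a = |L v|\<close>, so \<open>e\<^sub>u(x\<^sub>0) \<ge> a\<close> and \<open>c\<^sub>u(x\<^sub>0) \<ge> 1/a\<close>. Hence
  \<open>2 = r\<^sub>u(x\<^sub>0) \<ge> a + 1/a\<close>, which forces \<open>a = 1\<close>. Thus \<open>L\<close> maps unit vectors to unit
  vectors, i.e. it is a linear isometry.\<close>

lemma Limsup_filter_mono:
  assumes "F \<le> G"
  shows "Limsup F (f :: 'a \<Rightarrow> 'b::complete_lattice) \<le> Limsup G f"
  unfolding Limsup_def
  by (rule INF_superset_mono) (auto intro: filter_leD[OF assms])

lemma Limsup_ge_of_filterlim:
  fixes f :: "'a \<Rightarrow> 'b::{complete_linorder, linorder_topology}"
  assumes g: "filterlim g G F" and F: "F \<noteq> bot"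
    and lim: "((\<lambda>t. f (g t)) \<longlongrightarrow> l) F"
  shows "l \<le> Limsup G f"
proof -
  have "l = Limsup F (\<lambda>t. f (g t))"
    using lim_imp_Limsup[OF _ lim] F by simp
  also have "\<dots> \<le> Limsup (filtermap g F) f"
    by (rule Limsup_filtermap_ge)
  also have "\<dots> \<le> Limsup G f"
    using g by (intro Limsup_filter_mono) (simp add: filterlim_def)
  finally show ?thesis .
qed

lemma filterlim_ray_at_within:
  fixes x0 v :: "'a::real_normed_vector"
  assumes "x0 \<in> interior S" and "v \<noteq> 0"
  shows "filterlim (\<lambda>t. x0 + t *\<^sub>R v) (at x0 within S) (at_right 0)"
  unfolding filterlim_at
proof
  obtain r where r: "r > 0" "ball x0 r \<subseteq> S"
    using assms(1) mem_interior by blast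
  have "\<forall>\<^sub>F t in at_right 0. 0 < t \<and> t < r / norm v"
    unfolding eventually_at_right_field using r(1) assms(2) by (intro exI[of _ "r / norm v"]) auto
  then show "\<forall>\<^sub>F t in at_right 0. x0 + t *\<^sub>R v \<in> S \<and> x0 + t *\<^sub>R v \<noteq> x0"
  proof (rule eventually_mono)
    fix t assume t: "0 < t \<and> t < r / norm v"
    then have "x0 + t *\<^sub>R v \<in> ball x0 r"
      using assms(2) by (simp add: dist_norm pos_less_divide_eq)
    then show "x0 + t *\<^sub>R v \<in> S \<and> x0 + t *\<^sub>R v \<noteq> x0"
      using r(2) t assms(2) by auto
  qed
  have "((\<lambda>t. x0 + t *\<^sub>R v) \<longlongrightarrow> x0 + 0 *\<^sub>R v) (at_right (0::real))"
    by (intro tendsto_intros)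
  then show "((\<lambda>t. x0 + t *\<^sub>R v) \<longlongrightarrow> x0) (at_right 0)" by simp
qed

lemma has_derivative_ray_quotient_tendsto:
  fixes u :: "'a::real_normed_vector \<Rightarrow> 'b::real_normed_vector"
  assumes D: "(u has_derivative L) (at x0)" and v: "norm v = 1"
  shows "((\<lambda>t. norm (u (x0 + t *\<^sub>R v) - u x0) / norm (x0 + t *\<^sub>R v - x0)) \<longlongrightarrow> norm (L v))
           (at_right 0)"
proof -
  have lin: "linear L"
    using D has_derivative_linear by blast
  have "v \<noteq> 0"
    using v by auto
  then have ray: "filterlim (\<lambda>t. t *\<^sub>R v) (at 0) (at_right (0::real))"
    using filterlim_ray_at_within[of 0 UNIV v] by simp
  have "((\<lambda>h. norm (u (x0 + h) - u x0 - L h) / norm h) \<longlongrightarrow> 0) (at 0)"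
    using D by (simp add: has_derivative_at)
  from filterlim_compose[OF this ray]
  have err: "((\<lambda>t. norm (u (x0 + t *\<^sub>R v) - u x0 - L (t *\<^sub>R v)) / norm (t *\<^sub>R v))
      \<longlongrightarrow> 0) (at_right 0)"
    by (simp add: o_def)
  have "((\<lambda>t. norm (u (x0 + t *\<^sub>R v) - u x0) / norm (x0 + t *\<^sub>R v - x0) - norm (L v))
      \<longlongrightarrow> 0) (at_right 0)"
  proof (rule Lim_null_comparison[OF _ err])
    show "\<forall>\<^sub>F t in at_right 0.
        norm (norm (u (x0 + t *\<^sub>R v) - u x0) / norm (x0 + t *\<^sub>R v - x0) - norm (L v))
        \<le> norm (u (x0 + t *\<^sub>R v) - u x0 - L (t *\<^sub>R v)) / norm (t *\<^sub>R v)"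
      using eventually_at_right_less[of 0]
    proof (rule eventually_mono)
      fix t :: real assume t: "0 < t"
      let ?a = "u (x0 + t *\<^sub>R v) - u x0"
      have "\<bar>norm ?a / t - norm (L v)\<bar> = \<bar>norm ?a - norm (t *\<^sub>R L v)\<bar> / t"
        using t by (simp add: field_simps abs_divide)
      also have "\<dots> \<le> norm (?a - t *\<^sub>R L v) / t"
        using t by (intro divide_right_mono norm_triangle_ineq3) simp
      finally show "norm (norm ?a / norm (x0 + t *\<^sub>R v - x0) - norm (L v))
          \<le> norm (?a - L (t *\<^sub>R v)) / norm (t *\<^sub>R v)"
        using t v lin by (simp add: linear_scale)
    qed
  qed
  then show ?thesis
    by (rule iffD2[OF Lim_null])
qed

lemma ereal_add_inverse_le_2_imp_eq_1:
  fixes a :: real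
  assumes "a \<ge> 0" and "ereal a + inverse (ereal a) \<le> 2"
  shows "a = 1"
proof (cases "a = 0")
  case False
  then have "a > 0" "a + 1 / a \<le> 2"
    using assms by (simp_all add: inverse_eq_divide)
  then have "a * a + 1 \<le> 2 * a"
    by (simp add: field_simps)
  then have "(a - 1)\<^sup>2 \<le> 0"
    by (simp add: power2_eq_square algebra_simps)
  then show ?thesis
    by (metis power2_less_eq_zero_iff right_minus_eq)
qed (use assms in simp)

context
  fixes X :: "'a::real_normed_vector set" and u L :: "'a \<Rightarrow> 'b::real_normed_vector"
    and x0 v :: 'a
  assumes x0: "x0 \<in> interior X" and D: "(u has_derivative L) (at x0)" and v: "norm v = 1"
begin

private lemma ray_quotient_tendsto:
  "((\<lambda>t. ereal (norm (u (x0 + t *\<^sub>R v) - u x0) / norm (x0 + t *\<^sub>R v - x0))) \<longlongrightarrow> ereal (norm (L v)))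
     (at_right 0)"
  using has_derivative_ray_quotient_tendsto[OF D v] by (simp add: tendsto_ereal)

private lemma ray_at_within: "filterlim (\<lambda>t. x0 + t *\<^sub>R v) (at x0 within X) (at_right 0)"
  using filterlim_ray_at_within[OF x0, of v] v by fastforce

lemma e_u_ge_norm_derivative: "ereal (norm (L v)) \<le> e_u X u x0"
  unfolding e_u_def
  by (rule Limsup_ge_of_filterlim[OF ray_at_within _ ray_quotient_tendsto]) simp

lemma c_u_ge_inverse_norm_derivative: "inverse (ereal (norm (L v))) \<le> c_u X u x0"
  unfolding c_u_def
proof (rule Limsup_ge_of_filterlim[OF ray_at_within])
  let ?x = "\<lambda>t::real. x0 + t *\<^sub>R v"
  let ?q = "\<lambda>t. norm (u (?x t) - u x0) / norm (?x t - x0)"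
  have "((\<lambda>t. inverse (ereal (?q t))) \<longlongrightarrow> inverse (ereal (norm (L v)))) (at_right 0)"
    by (rule Extended_Real.tendsto_inverse_ereal[OF ray_quotient_tendsto]) simp
  moreover have "\<forall>\<^sub>F t in at_right 0. inverse (ereal (?q t)) =
      (if u (?x t) = u x0 then \<infinity> else ereal (norm (?x t - x0) / norm (u (?x t) - u x0)))"
    using eventually_at_right_less[of 0]
  proof (rule eventually_mono)
    fix t :: real assume "0 < t"
    then have "?x t - x0 \<noteq> 0"
      using v by auto
    then show "inverse (ereal (?q t)) =
        (if u (?x t) = u x0 then \<infinity> else ereal (norm (?x t - x0) / norm (u (?x t) - u x0)))"
      by (cases "u (?x t) = u x0") (simp_all add: inverse_eq_divide)
  qed
  ultimately show "((\<lambda>t. if u (?x t) = u x0 then \<infinity>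
      else ereal (norm (?x t - x0) / norm (u (?x t) - u x0))) \<longlongrightarrow> inverse (ereal (norm (L v))))
      (at_right 0)"
    by (rule tendsto_cong[THEN iffD1, rotated])
qed simp

lemma norm_derivative_eq_1_if_r_u_le_2:
  assumes "r_u X u x0 \<le> 2"
  shows "norm (L v) = 1"
proof (rule ereal_add_inverse_le_2_imp_eq_1)
  show "ereal (norm (L v)) + inverse (ereal (norm (L v))) \<le> 2"
    using add_mono[OF e_u_ge_norm_derivative c_u_ge_inverse_norm_derivative] assms
    by (simp add: r_u_def)
qed simp

end

lemma linear_norm_preserving_if_unit_sphere:
  fixes L :: "'a::real_normed_vector \<Rightarrow> 'b::real_normed_vector"
  assumes "linear L" and unit: "\<And>v. norm v = 1 \<Longrightarrow> norm (L v) = 1"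
  shows "norm (L w) = norm w"
proof (cases "w = 0")
  case False
  then have "L w = norm w *\<^sub>R L (w /\<^sub>R norm w)"
    using assms(1) by (simp add: linear_scale)
  then show ?thesis
    using unit[of "w /\<^sub>R norm w"] False by simp
qed (use assms(1) linear_0 in simp)

theorem lemma3p7:
  fixes \<Omega> Y :: "(real ^ 'n) set" and u :: "real ^ 'n \<Rightarrow> real ^ 'n" and x0 :: "real ^ 'n"
  assumes "open \<Omega>" and "\<Omega> \<noteq> {}"
    and "x0 \<in> \<Omega>"
    and "u ` closure \<Omega> \<subseteq> Y"
    and "u differentiable (at x0)"
    and "r_u (closure \<Omega>) u x0 = 2"
  shows "orthogonal_matrix (matrix (frechet_derivative u (at x0)))"
proof -
  let ?L = "frechet_derivative u (at x0)"
  have D: "(u has_derivative ?L) (at x0)"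
    using assms(5) frechet_derivative_works by blast
  have x0: "x0 \<in> interior (closure \<Omega>)"
    using assms(1,3) interior_maximal closure_subset by blast
  have "linear ?L"
    using D has_derivative_linear by blast
  moreover have "norm (?L v) = 1" if "norm v = 1" for v
    using norm_derivative_eq_1_if_r_u_le_2[OF x0 D that] assms(6) by simp
  ultimately have "orthogonal_transformation ?L"
    using linear_norm_preserving_if_unit_sphere unfolding orthogonal_transformation by blast
  then show ?thesis
    using orthogonal_transformation_matrix by blast
qed

end
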